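(* Let $\mathcal H$ be an infinite-dimensional complex Hilbert space and let $\mathcal G_f(\mathcal H)$ be the set of those $t\in\mathcal V_f(\mathcal H)$ for which there exists $A\in\mathcal V(\mathcal H)$ with $D(A)=D(t)$ and $t(x,y)=(Ax,y)$ for all $x,y\in D(t)$. Then $(\mathcal G_f(\mathcal H);\oplus_{|\mathcal G_f(\mathcal H)},o)$ is a sub-generalized effect algebra of $(\mathcal V_f(\mathcal H);\oplus,o)$ and is isomorphic to the generalized effect algebra $(\mathcal V(\mathcal H);\oplus_{\mathcal D},O)$.
   Context: Bilinear forms $t$ on $\mathcal H$ are sesquilinear maps $D(t)\times D(t)\to\mathbb C$ on a dense linear subspace $D(t)$ (linear in the first argument); $t$ is positive if $t(x,x)\ge0$ on $D(t)$, bounded if $\sup\{t(x,x)\mid x\in D(t),\|x\|=1\}<\infty$. The sum $t+s$ has domain $D(t)\cap D(s)$. $o$ is the zero form on $\mathcal H$. $\mathcal V_f(\mathcal H)$ is the set of positive bilinear forms with dense domain such that $D(t)=\mathcal H$ whenever $t$ is bounded; $t\oplus s$ is defined iff $t$ or $s$ is bounded or $D(t)=D(s)$, and then $t\oplus s=t+s$. $\mathcal V(\mathcal H)$ is the set of densely defined linear operators $A:D(A)\to\mathcal H$ with $(Ax,x)\ge0$ for all $x\in D(A)$ and with $D(A)=\mathcal H$ whenever $A$ is bounded; for $A,B\in\mathcal V(\mathcal H)$, $A\oplus_{\mathcal D}B$ is defined iff $A$ or $B$ is bounded or $D(A)=D(B)$, and then $A\oplus_{\mathcal D}B=A+B$ (on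 $D(A)\cap D(B)$); $O$ is the zero operator. A generalized effect algebra is a structure $(E;\oplus,0)$ with a partial operation that is commutative and associative (when one side is defined), has $x\oplus0=x$, is cancellative, and satisfies $x\oplus y=0\Rightarrow x=y=0$. A subset $Q\subseteq E$ is a sub-generalized effect algebra if $0\in Q$ and whenever $x\oplus y=z$ in $E$ with two of $x,y,z$ in $Q$, all three are in $Q$. For $Q\subseteq E$, $x\oplus_{|Q}y$ is defined iff $x\oplus y$ is defined in $E$ and lies in $Q$, and then equals $x\oplus y$. *)

theory Defs
  imports "HOL-Analysis.Analysis"
begin

class scaleC = scaleR +
  fixes scaleC :: "complex \<Rightarrow> 'a \<Rightarrow> 'a" (infixr \<open>*\<^sub>C\<close> 75)
  assumes scaleR_scaleC: "scaleR r = scaleC (complex_of_real r)"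

class complex_vector = scaleC + ab_group_add +
  assumes scaleC_add_right: "a *\<^sub>C (x + y) = a *\<^sub>C x + a *\<^sub>C y"
    and scaleC_add_left: "(a + b) *\<^sub>C x = a *\<^sub>C x + b *\<^sub>C x"
    and scaleC_scaleC: "a *\<^sub>C (b *\<^sub>C x) = (a * b) *\<^sub>C x"
    and scaleC_one: "1 *\<^sub>C x = x"

class complex_normed_vector = complex_vector + real_normed_vector +
  assumes norm_scaleC: "norm (a *\<^sub>C x) = cmod a * norm x"

text \<open>Inner product, linear in the first argument (as in the paper).\<close>
class complex_inner = complex_normed_vector +
  fixes cinner :: "'a \<Rightarrow> 'a \<Rightarrow> complex"
  assumes cinner_commute: "cinner x y = cnj (cinner y x)"
    and cinner_add_left: "cinner (x + y) z = cinner x z + cinner y z"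
    and cinner_scaleC_left: "cinner (a *\<^sub>C x) y = a * cinner x y"
    and cinner_nonneg: "cinner x x \<in> \<real> \<and> 0 \<le> Re (cinner x x)"
    and cinner_eq_zero_iff: "cinner x x = 0 \<longleftrightarrow> x = 0"
    and norm_eq_sqrt_cinner: "norm x = sqrt (Re (cinner x x))"

class chilbert = complex_inner + complete_space

definition cspan :: "'a::complex_vector set \<Rightarrow> 'a set" where
  "cspan S = {(\<Sum>a\<in>T. c a *\<^sub>C a) | T c. finite T \<and> T \<subseteq> S}"

definition infinite_dimensional :: "'a::complex_vector itself \<Rightarrow> bool" where
  "infinite_dimensional _ \<longleftrightarrow> \<not> (\<exists>S::'a set. finite S \<and> cspan S = UNIV)"

definition csubspace :: "'a::complex_vector set \<Rightarrow> bool" where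
  "csubspace S \<longleftrightarrow> 0 \<in> S \<and> (\<forall>x\<in>S. \<forall>y\<in>S. x + y \<in> S) \<and> (\<forall>c. \<forall>x\<in>S. c *\<^sub>C x \<in> S)"

text \<open>A form is a pair (D(t), values); values are forced to be 0 outside D(t) x D(t),
  so that equality of forms is equality of domains and of values on the domain.\<close>
type_synonym 'a form = "'a set \<times> ('a \<Rightarrow> 'a \<Rightarrow> complex)"

definition is_form :: "'a::complex_normed_vector form \<Rightarrow> bool" where
  "is_form t \<longleftrightarrow> (let D = fst t; f = snd t in
     csubspace D \<and> closure D = UNIV \<and>
     (\<forall>x\<in>D. \<forall>y\<in>D. \<forall>z\<in>D. f (x + y) z = f x z + f y z \<and> f z (x + y) = f z x + f z y) \<and>
     (\<forall>c. \<forall>x\<in>D. \<forall>y\<in>D. f (c *\<^sub>C x) y = c * f x y \<and> f x (c *\<^sub>C y) = cnj c * f x y) \<and>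
     (\<forall>x y. x \<notin> D \<or> y \<notin> D \<longrightarrow> f x y = 0))"

definition form_positive :: "'a form \<Rightarrow> bool" where
  "form_positive t \<longleftrightarrow> (\<forall>x\<in>fst t. snd t x x \<in> \<real> \<and> 0 \<le> Re (snd t x x))"

definition form_bounded :: "'a::real_normed_vector form \<Rightarrow> bool" where
  "form_bounded t \<longleftrightarrow> (\<exists>C. \<forall>x\<in>fst t. norm x = 1 \<longrightarrow> cmod (snd t x x) \<le> C)"

definition form_add :: "'a form \<Rightarrow> 'a form \<Rightarrow> 'a form" where
  "form_add t s = (fst t \<inter> fst s,
     \<lambda>x y. if x \<in> fst t \<inter> fst s \<and> y \<in> fst t \<inter> fst s then snd t x y + snd s x y else 0)"

definition zero_form :: "'a form" where
  "zero_form = (UNIV, \<lambda>x y. 0)"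

definition Vf :: "'a::complex_normed_vector form set" where
  "Vf = {t. is_form t \<and> form_positive t \<and> (form_bounded t \<longrightarrow> fst t = UNIV)}"

definition oplus_f :: "'a::real_normed_vector form \<Rightarrow> 'a form \<Rightarrow> 'a form option" where
  "oplus_f t s = (if form_bounded t \<or> form_bounded s \<or> fst t = fst s
                  then Some (form_add t s) else None)"

text \<open>An operator is a pair (D(A), A) with A x = 0 outside D(A).\<close>
type_synonym 'a lop = "'a set \<times> ('a \<Rightarrow> 'a)"

definition is_op :: "'a::complex_normed_vector lop \<Rightarrow> bool" where
  "is_op A \<longleftrightarrow> (let D = fst A; f = snd A in
     csubspace D \<and> closure D = UNIV \<and>
     (\<forall>x\<in>D. \<forall>y\<in>D. f (x + y) = f x + f y) \<and>
     (\<forall>c. \<forall>x\<in>D. f (c *\<^sub>C x) = c *\<^sub>C f x) \<and>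
     (\<forall>x. x \<notin> D \<longrightarrow> f x = 0))"

definition op_bounded :: "'a::real_normed_vector lop \<Rightarrow> bool" where
  "op_bounded A \<longleftrightarrow> (\<exists>C. \<forall>x\<in>fst A. norm (snd A x) \<le> C * norm x)"

definition op_add :: "'a::ab_group_add lop \<Rightarrow> 'a lop \<Rightarrow> 'a lop" where
  "op_add A B = (fst A \<inter> fst B,
     \<lambda>x. if x \<in> fst A \<inter> fst B then snd A x + snd B x else 0)"

definition zero_op :: "'a::zero lop" where
  "zero_op = (UNIV, \<lambda>x. 0)"

definition V :: "'a::complex_inner lop set" where
  "V = {A. is_op A \<and> (\<forall>x\<in>fst A. cinner (snd A x) x \<in> \<real> \<and> 0 \<le> Re (cinner (snd A x) x))
          \<and> (op_bounded A \<longrightarrow> fst A = UNIV)}"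

definition oplus_D :: "'a::{real_normed_vector} lop \<Rightarrow> 'a lop \<Rightarrow> 'a lop option" where
  "oplus_D A B = (if op_bounded A \<or> op_bounded B \<or> fst A = fst B
                  then Some (op_add A B) else None)"

definition Gf :: "'a::complex_inner form set" where
  "Gf = {t \<in> Vf. \<exists>A\<in>V. fst A = fst t \<and>
          (\<forall>x\<in>fst t. \<forall>y\<in>fst t. snd t x y = cinner (snd A x) y)}"

definition gea :: "'b set \<Rightarrow> ('b \<Rightarrow> 'b \<Rightarrow> 'b option) \<Rightarrow> 'b \<Rightarrow> bool" where
  "gea E op z \<longleftrightarrow>
     z \<in> E \<and>
     (\<forall>x\<in>E. \<forall>y\<in>E. \<forall>w. op x y = Some w \<longrightarrow> w \<in> E) \<and>
     (\<forall>x\<in>E. \<forall>y\<in>E. op x y = op y x) \<and>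
     (\<forall>x\<in>E. \<forall>y\<in>E. \<forall>u\<in>E. Option.bind (op x y) (\<lambda>v. op v u) = Option.bind (op y u) (\<lambda>v. op x v)) \<and>
     (\<forall>x\<in>E. op x z = Some x) \<and>
     (\<forall>x\<in>E. \<forall>y\<in>E. \<forall>y'\<in>E. \<forall>w. op x y = Some w \<and> op x y' = Some w \<longrightarrow> y = y') \<and>
     (\<forall>x\<in>E. \<forall>y\<in>E. op x y = Some z \<longrightarrow> x = z \<and> y = z)"

definition sub_gea :: "'b set \<Rightarrow> 'b set \<Rightarrow> ('b \<Rightarrow> 'b \<Rightarrow> 'b option) \<Rightarrow> 'b \<Rightarrow> bool" where
  "sub_gea Q E op z \<longleftrightarrow> gea E op z \<and> Q \<subseteq> E \<and> z \<in> Q \<and>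
     (\<forall>x\<in>E. \<forall>y\<in>E. \<forall>w\<in>E. op x y = Some w \<longrightarrow>
        ((x \<in> Q \<and> y \<in> Q) \<or> (x \<in> Q \<and> w \<in> Q) \<or> (y \<in> Q \<and> w \<in> Q)) \<longrightarrow>
        x \<in> Q \<and> y \<in> Q \<and> w \<in> Q)"

definition restr_op :: "'b set \<Rightarrow> ('b \<Rightarrow> 'b \<Rightarrow> 'b option) \<Rightarrow> 'b \<Rightarrow> 'b \<Rightarrow> 'b option" where
  "restr_op Q op x y = (case op x y of Some w \<Rightarrow> if w \<in> Q then Some w else None | None \<Rightarrow> None)"

definition gea_iso :: "('b \<Rightarrow> 'c) \<Rightarrow> 'b set \<Rightarrow> ('b \<Rightarrow> 'b \<Rightarrow> 'b option) \<Rightarrow> 'b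
     \<Rightarrow> 'c set \<Rightarrow> ('c \<Rightarrow> 'c \<Rightarrow> 'c option) \<Rightarrow> 'c \<Rightarrow> bool" where
  "gea_iso \<phi> E opE zE F opF zF \<longleftrightarrow> bij_betw \<phi> E F \<and> \<phi> zE = zF \<and>
     (\<forall>x\<in>E. \<forall>y\<in>E. opF (\<phi> x) (\<phi> y) = map_option \<phi> (opE x y))"

definition gea_isomorphic :: "'b set \<Rightarrow> ('b \<Rightarrow> 'b \<Rightarrow> 'b option) \<Rightarrow> 'b
     \<Rightarrow> 'c set \<Rightarrow> ('c \<Rightarrow> 'c \<Rightarrow> 'c option) \<Rightarrow> 'c \<Rightarrow> bool" where
  "gea_isomorphic E opE zE F opF zF \<longleftrightarrow> (\<exists>\<phi>. gea_iso \<phi> E opE zE F opF zF)"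

end

theory Submission
  imports Defs
begin

text \<open>
  An operator \<open>A \<in> V\<close> induces the form \<open>op_form A\<close>, \<open>(x, y) \<mapsto> (A x, y)\<close> on \<open>D(A)\<close>.
  Since \<open>D(A)\<close> is dense, \<open>A\<close> is determined by this form, and by the Cauchy--Schwarz
  inequality for positive forms \<open>A\<close> is bounded iff its form is. Hence \<open>op_form\<close> is an injective
  homomorphism from \<open>V\<close> into \<open>Vf\<close> with image \<open>Gf\<close>: the operator structure inherits the
  generalized effect algebra axioms from the forms and is isomorphic to \<open>Gf\<close>.

  Cancellation in \<open>Vf\<close> rests on the fact that two bounded forms agreeing on a dense subspace
  coincide. For \<open>Gf\<close> to be a sub-generalized effect algebra the essential case is a difference:
  if \<open>op_form A \<oplus> s = op_form C\<close>, then \<open>s\<close> is induced by \<open>C - A\<close> when \<open>D(s) \<subseteq> D(A)\<close>;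
  otherwise \<open>s\<close> is bounded and everywhere defined, \<open>C - A\<close> is Lipschitz on the dense
  subspace \<open>D(A)\<close> by the bound of \<open>s\<close>, and its continuous extension to the whole space induces
  \<open>s\<close>. No Riesz representation theorem is needed.
\<close>

lemma scaleC_of_real: "complex_of_real r *\<^sub>C (x::'a::complex_normed_vector) = r *\<^sub>R x"
  by (simp add: scaleR_scaleC)

lemma scaleC_minus1_left: "(-1) *\<^sub>C (x::'a::complex_normed_vector) = - x"
  using scaleC_of_real[of "-1" x] by simp

lemma scaleC_zero_left [simp]: "0 *\<^sub>C (x::'a::complex_normed_vector) = 0"
  using scaleC_of_real[of 0 x] by simp

lemma scaleC_zero_right [simp]: "c *\<^sub>C (0::'a::complex_normed_vector) = 0"
  using scaleC_add_right[of c 0 0] by simp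

lemma csubspace_UNIV: "csubspace UNIV"
  by (simp add: csubspace_def)

lemma csubspace_Int: "csubspace A \<Longrightarrow> csubspace B \<Longrightarrow> csubspace (A \<inter> B)"
  by (simp add: csubspace_def)

lemma csubspace_add: "csubspace D \<Longrightarrow> x \<in> D \<Longrightarrow> y \<in> D \<Longrightarrow> x + y \<in> D"
  by (simp add: csubspace_def)

lemma csubspace_scaleC: "csubspace D \<Longrightarrow> x \<in> D \<Longrightarrow> c *\<^sub>C x \<in> D"
  by (simp add: csubspace_def)

lemma csubspace_diff:
  assumes "csubspace D" "x \<in> D" "y \<in> D"
  shows "(x::'a::complex_normed_vector) - y \<in> D"
  using csubspace_add[OF assms(1,2) csubspace_scaleC[OF assms(1,3), of "-1"]]
  by (simp add: scaleC_minus1_left)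

lemma cinner_add_right: "cinner x (y + z) = cinner x y + cinner x z"
  by (subst (1 2 3) cinner_commute) (simp add: cinner_add_left)

lemma cinner_scaleC_right: "cinner x (c *\<^sub>C y) = cnj c * cinner x y"
  by (subst (1 2) cinner_commute) (simp add: cinner_scaleC_left)

lemma cinner_zero_left [simp]: "cinner 0 y = 0"
  using cinner_add_left[of 0 0 y] by simp

lemma cinner_diff_left: "cinner (x - y) z = cinner x z - cinner y z"
  using cinner_add_left[of "x - y" y z] by simp

lemma cinner_self: "cinner x x = complex_of_real ((norm x)\<^sup>2)"
proof -
  have r: "cinner x x \<in> \<real>" "0 \<le> Re (cinner x x)"
    using cinner_nonneg by auto
  then have "(norm x)\<^sup>2 = Re (cinner x x)"
    by (simp add: norm_eq_sqrt_cinner)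
  then show ?thesis
    using r by (simp add: complex_eq_iff complex_is_Real_iff)
qed

lemma bounded_bilinear_continuous_on_pairs:
  "bounded_bilinear f \<Longrightarrow> continuous_on S (\<lambda>p. f (fst p) (snd p))"
  by (rule bounded_bilinear.continuous_on) (auto intro: continuous_on_fst continuous_on_snd continuous_on_id)

lemma continuous_on_pairs_eq_on_dense:
  fixes f g :: "'a::real_normed_vector \<Rightarrow> 'a \<Rightarrow> 'b::real_normed_vector"
  assumes "continuous_on UNIV (\<lambda>p. f (fst p) (snd p))" "continuous_on UNIV (\<lambda>p. g (fst p) (snd p))"
    and dense: "closure D = UNIV" and eq: "\<And>x y. x \<in> D \<Longrightarrow> y \<in> D \<Longrightarrow> f x y = g x y"
  shows "f x y = g x y"
proof -
  have dense2: "closure (D \<times> D) = UNIV"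
    by (simp add: closure_Times dense)
  have "(\<lambda>p. f (fst p) (snd p) - g (fst p) (snd p)) (x, y) = 0"
  proof (rule continuous_constant_on_closure[of "D \<times> D"])
    show "continuous_on (closure (D \<times> D)) (\<lambda>p. f (fst p) (snd p) - g (fst p) (snd p))"
      unfolding dense2 by (rule continuous_on_diff[OF assms(1,2)])
  qed (auto simp: eq dense2)
  then show ?thesis
    by simp
qed

section \<open>Positive sesquilinear forms\<close>

definition pos_sesquilinear_on :: "'a::complex_normed_vector set \<Rightarrow> ('a \<Rightarrow> 'a \<Rightarrow> complex) \<Rightarrow> bool" where
  "pos_sesquilinear_on D f \<longleftrightarrow> csubspace D \<and>
     (\<forall>x\<in>D. \<forall>y\<in>D. \<forall>z\<in>D. f (x + y) z = f x z + f y z \<and> f z (x + y) = f z x + f z y) \<and>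
     (\<forall>c. \<forall>x\<in>D. \<forall>y\<in>D. f (c *\<^sub>C x) y = c * f x y \<and> f x (c *\<^sub>C y) = cnj c * f x y) \<and>
     (\<forall>x\<in>D. f x x \<in> \<real> \<and> 0 \<le> Re (f x x))"

lemma pos_sesquilinear_onD:
  assumes "pos_sesquilinear_on D f" and "x \<in> D" "y \<in> D" "z \<in> D"
  shows "csubspace D"
    and "f (x + y) z = f x z + f y z" "f z (x + y) = f z x + f z y"
    and "f (c *\<^sub>C x) y = c * f x y" "f x (c *\<^sub>C y) = cnj c * f x y"
    and "f x x \<in> \<real>" "0 \<le> Re (f x x)"
  using assms unfolding pos_sesquilinear_on_def by blast+

lemma pos_sesquilinear_on_cong:
  assumes "pos_sesquilinear_on D f" and "\<And>x y. x \<in> D \<Longrightarrow> y \<in> D \<Longrightarrow> g x y = f x y"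
  shows "pos_sesquilinear_on D g"
  using assms unfolding pos_sesquilinear_on_def by (simp add: csubspace_def)

lemma pos_sesquilinear_on_add:
  assumes "pos_sesquilinear_on D f" and "pos_sesquilinear_on D' g"
  shows "pos_sesquilinear_on (D \<inter> D') (\<lambda>x y. f x y + g x y)"
  using assms unfolding pos_sesquilinear_on_def by (simp add: csubspace_Int csubspace_def algebra_simps)

lemma pos_sesquilinear_on_cinner: "pos_sesquilinear_on (UNIV::'a::complex_inner set) cinner"
  by (simp add: pos_sesquilinear_on_def csubspace_UNIV cinner_add_left cinner_add_right
      cinner_scaleC_left cinner_scaleC_right cinner_nonneg)

lemma pos_sesquilinear_on_diff_left:
  assumes "pos_sesquilinear_on D f" "x \<in> D" "y \<in> D" "z \<in> D"
  shows "f (x - y) z = f x z - f y z"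
  using pos_sesquilinear_onD(2)[OF assms(1) csubspace_diff[OF pos_sesquilinear_onD(1)[OF assms] assms(2,3)]
      assms(3,4)]
  by simp

lemma pos_sesquilinear_on_hermitian:
  assumes f: "pos_sesquilinear_on D f" and x: "x \<in> D" and y: "y \<in> D"
  shows "f y x = cnj (f x y)"
proof -
  have D: "csubspace D" and iy: "\<i> *\<^sub>C y \<in> D"
    using pos_sesquilinear_onD(1)[OF f x x x] csubspace_scaleC y by blast+
  note add = pos_sesquilinear_onD(2,3)[OF f] and sc = pos_sesquilinear_onD(4,5)[OF f]
  have re: "Im (f u u) = 0" if "u \<in> D" for u
    using pos_sesquilinear_onD(6)[OF f that that that] by (simp add: complex_is_Real_iff)
  have xy: "x + y \<in> D" and xiy: "x + \<i> *\<^sub>C y \<in> D"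
    using D x y iy by (auto intro: csubspace_add)
  have "f (x + y) (x + y) = f x x + f x y + f y x + f y y"
    using add[OF x y xy] add[OF x y x] add[OF x y y] by simp
  then have "Im (f x y) + Im (f y x) = 0"
    using re[OF xy] re[OF x] re[OF y] by simp
  moreover have "f (x + \<i> *\<^sub>C y) (x + \<i> *\<^sub>C y) = f x x - \<i> * f x y + \<i> * f y x + f y y"
    using add[OF x iy xiy] add[OF x iy x] add[OF x iy iy] sc[OF x y x, of \<i>] sc[OF y x x, of \<i>]
      sc[OF y iy x, of \<i>] sc[OF y y x, of \<i>] by (simp add: algebra_simps)
  then have "Re (f y x) - Re (f x y) = 0"
    using re[OF xiy] re[OF x] re[OF y] by simp
  ultimately show ?thesis
    by (simp add: complex_eq_iff)
qed

lemma le_prod_of_quadratic_nonneg: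
  fixes a B c :: real
  assumes "0 \<le> c" "0 < B" and q: "\<And>t. 0 \<le> a - 2 * t * B + t\<^sup>2 * B * c"
  shows "B \<le> a * c"
proof (cases "c = 0")
  case True
  have "0 \<le> a - 2 * ((a + 1) / (2 * B)) * B"
    using q[of "(a + 1) / (2 * B)"] True by simp
  also have "\<dots> = -1"
    using \<open>0 < B\<close> by (simp add: field_simps)
  finally show ?thesis
    by simp
next
  case False
  then have c: "c > 0"
    using assms by simp
  have "0 \<le> a - 2 * (1 / c) * B + (1 / c)\<^sup>2 * B * c"
    by (rule q)
  also have "\<dots> = (a * c - B) / c"
    using c by (simp add: field_simps power2_eq_square)
  finally show ?thesis
    using c by (simp add: zero_le_divide_iff)
qed

lemma pos_sesquilinear_on_Cauchy_Schwarz: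
  assumes f: "pos_sesquilinear_on D f" and x: "x \<in> D" and y: "y \<in> D"
  shows "(cmod (f x y))\<^sup>2 \<le> Re (f x x) * Re (f y y)"
proof -
  note add = pos_sesquilinear_onD(2,3)[OF f] and sc = pos_sesquilinear_onD(4,5)[OF f]
  have real: "f u u = complex_of_real (Re (f u u))" if "u \<in> D" for u
    using pos_sesquilinear_onD(6)[OF f that that that] by (simp add: complex_is_Real_iff complex_eq_iff)
  have pos: "0 \<le> Re (f u u)" if "u \<in> D" for u
    using pos_sesquilinear_onD(7)[OF f that that that] .
  have "0 \<le> Re (f x x) - 2 * t * (cmod (f x y))\<^sup>2 + t\<^sup>2 * (cmod (f x y))\<^sup>2 * Re (f y y)" for t
  proof -
    define l where "l = - (complex_of_real t * f x y)"
    have ly: "l *\<^sub>C y \<in> D" and xly: "x + l *\<^sub>C y \<in> D"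
      using pos_sesquilinear_onD(1)[OF f x x x] x y by (auto intro: csubspace_add csubspace_scaleC)
    have "f (x + l *\<^sub>C y) (x + l *\<^sub>C y) = f x x + cnj l * f x y + l * f y x + l * cnj l * f y y"
      using add[OF x ly xly] add[OF x ly x] add[OF x ly ly] sc[OF x y x, of l] sc[OF y x x, of l]
        sc[OF y ly x, of l] sc[OF y y x, of l] by (simp add: algebra_simps)
    also have "Re \<dots> = Re (f x x) - 2 * t * (cmod (f x y))\<^sup>2 + t\<^sup>2 * (cmod (f x y))\<^sup>2 * Re (f y y)"
      unfolding pos_sesquilinear_on_hermitian[OF f x y] l_def cmod_power2
      by (subst (1 2) real[OF x], subst (1 2) real[OF y]) (simp add: algebra_simps power2_eq_square)
    finally show ?thesis
      using pos[OF xly] by simp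
  qed
  then show ?thesis
    using pos[OF x] pos[OF y] by (cases "f x y = 0") (auto intro: le_prod_of_quadratic_nonneg)
qed

lemma pos_sesquilinear_on_bound:
  assumes f: "pos_sesquilinear_on D f" and C: "0 \<le> C" and bound: "\<And>x. x \<in> D \<Longrightarrow> Re (f x x) \<le> C * (norm x)\<^sup>2"
    and x: "x \<in> D" and y: "y \<in> D"
  shows "cmod (f x y) \<le> C * norm x * norm y"
proof -
  have "(cmod (f x y))\<^sup>2 \<le> Re (f x x) * Re (f y y)"
    by (rule pos_sesquilinear_on_Cauchy_Schwarz[OF f x y])
  also have "\<dots> \<le> (C * (norm x)\<^sup>2) * (C * (norm y)\<^sup>2)"
    by (rule mult_mono)
      (use bound[OF x] bound[OF y] pos_sesquilinear_onD(7)[OF f x x x] pos_sesquilinear_onD(7)[OF f y y y] C in auto)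
  also have "\<dots> = (C * norm x * norm y)\<^sup>2"
    by (simp add: power2_eq_square)
  finally show ?thesis
    by (rule power2_le_imp_le) (use C in simp)
qed

lemma pos_sesquilinear_on_diag_zero:
  assumes "pos_sesquilinear_on D f" and "\<And>x. x \<in> D \<Longrightarrow> f x x = 0" and "x \<in> D" "y \<in> D"
  shows "f x y = 0"
  using pos_sesquilinear_on_Cauchy_Schwarz[OF assms(1,3,4)] assms(2,3,4) by simp

lemma quadratic_bound_of_form_bounded:
  assumes f: "pos_sesquilinear_on D f" and "form_bounded (D, f)"
  shows "\<exists>C\<ge>0. \<forall>x\<in>D. Re (f x x) \<le> C * (norm x)\<^sup>2"
proof -
  obtain C where C: "\<And>x. x \<in> D \<Longrightarrow> norm x = 1 \<Longrightarrow> cmod (f x x) \<le> C"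
    using assms(2) by (auto simp: form_bounded_def)
  have "Re (f x x) \<le> max C 0 * (norm x)\<^sup>2" if x: "x \<in> D" for x
  proof (cases "x = 0")
    case True
    then show ?thesis
      using pos_sesquilinear_onD(4)[OF f x x x, of 0] by simp
  next
    case False
    define c where "c = complex_of_real (1 / norm x)"
    have u: "c *\<^sub>C x \<in> D" and "norm (c *\<^sub>C x) = 1"
      using csubspace_scaleC[OF pos_sesquilinear_onD(1)[OF f x x x] x] False
      by (auto simp: c_def norm_scaleC norm_divide)
    then have "Re (f (c *\<^sub>C x) (c *\<^sub>C x)) \<le> C"
      using C complex_Re_le_cmod order_trans by blast
    moreover have "f (c *\<^sub>C x) (c *\<^sub>C x) = complex_of_real (1 / (norm x)\<^sup>2) * f x x"
      using pos_sesquilinear_onD(4)[OF f x u x, of c] pos_sesquilinear_onD(5)[OF f x x x, of c]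
      by (simp add: c_def power2_eq_square)
    ultimately have "Re (f x x) \<le> C * (norm x)\<^sup>2"
      using False by (simp add: divide_le_eq)
    also have "\<dots> \<le> max C 0 * (norm x)\<^sup>2"
      by (simp add: mult_right_mono)
    finally show ?thesis .
  qed
  then show ?thesis
    by (intro exI[of _ "max C 0"]) auto
qed

lemma form_bounded_iff_quadratic_bound:
  assumes f: "pos_sesquilinear_on D f"
  shows "form_bounded (D, f) \<longleftrightarrow> (\<exists>C\<ge>0. \<forall>x\<in>D. Re (f x x) \<le> C * (norm x)\<^sup>2)"
proof
  assume "\<exists>C\<ge>0. \<forall>x\<in>D. Re (f x x) \<le> C * (norm x)\<^sup>2"
  then obtain C where C: "\<And>x. x \<in> D \<Longrightarrow> Re (f x x) \<le> C * (norm x)\<^sup>2"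
    by blast
  have "cmod (f x x) \<le> C" if "x \<in> D" "norm x = 1" for x
    using pos_sesquilinear_onD(6,7)[OF f that(1) that(1) that(1)] C[OF that(1)] that(2)
    by (simp add: complex_is_Real_iff cmod_eq_Re)
  then show "form_bounded (D, f)"
    unfolding form_bounded_def by auto
qed (rule quadratic_bound_of_form_bounded[OF f])

lemma cinner_Cauchy_Schwarz: "cmod (cinner x y) \<le> norm x * norm (y::'a::complex_inner)"
  using pos_sesquilinear_on_bound[OF pos_sesquilinear_on_cinner, of 1 x y] by (simp add: cinner_self)

lemma bounded_bilinear_pos_sesquilinear:
  assumes f: "pos_sesquilinear_on UNIV f" and C: "0 \<le> C" and bound: "\<And>x. Re (f x x) \<le> C * (norm x)\<^sup>2"
  shows "bounded_bilinear f"
proof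
  fix a a' b b' :: 'a and r :: real
  show "f (a + a') b = f a b + f a' b" "f a (b + b') = f a b + f a b'"
    using pos_sesquilinear_onD(2,3)[OF f] by blast+
  show "f (r *\<^sub>R a) b = r *\<^sub>R f a b" "f a (r *\<^sub>R b) = r *\<^sub>R f a b"
    using pos_sesquilinear_onD(4,5)[OF f, of a b a "complex_of_real r"]
    by (simp_all add: scaleC_of_real scaleR_conv_of_real)
  show "\<exists>K. \<forall>a b. cmod (f a b) \<le> norm a * norm b * K"
    using pos_sesquilinear_on_bound[OF f C] bound by (intro exI[of _ C]) (simp add: mult_ac)
qed

lemma bounded_bilinear_cinner: "bounded_bilinear (cinner :: 'a::complex_inner \<Rightarrow> 'a \<Rightarrow> complex)"
  using bounded_bilinear_pos_sesquilinear[OF pos_sesquilinear_on_cinner, of 1] by (simp add: cinner_self)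

lemma norm_le_of_cinner_bound_on_dense:
  fixes z :: "'a::complex_inner"
  assumes dense: "closure D = UNIV" and M: "0 \<le> M" and bound: "\<And>b. b \<in> D \<Longrightarrow> cmod (cinner z b) \<le> M * norm b"
  shows "norm z \<le> M"
proof -
  have "continuous_on UNIV (\<lambda>b. cinner z b)"
    by (rule bounded_bilinear.continuous_on[OF bounded_bilinear_cinner continuous_on_const continuous_on_id])
  then have "continuous_on (closure D) (\<lambda>b. cmod (cinner z b) - M * norm b)"
    unfolding dense
    by (rule continuous_on_diff[OF continuous_on_norm continuous_on_mult_left[OF continuous_on_norm_id]])
  from continuous_le_on_closure[OF this, of z 0] bound
  have "cmod (cinner z z) - M * norm z \<le> 0"
    by (simp add: dense)
  then have "norm z * norm z \<le> M * norm z"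
    by (simp add: cinner_self power2_eq_square norm_mult)
  then show ?thesis
    using M by (cases "norm z = 0") auto
qed

lemma cinner_eq_zero_on_dense:
  fixes z :: "'a::complex_inner"
  assumes "closure D = UNIV" and "\<And>b. b \<in> D \<Longrightarrow> cinner z b = 0"
  shows "z = 0"
  using norm_le_of_cinner_bound_on_dense[OF assms(1) order_refl, of z] assms(2) by simp

lemma bounded_form_representable:
  fixes y :: "'a::chilbert \<Rightarrow> 'a \<Rightarrow> complex"
  assumes y: "pos_sesquilinear_on UNIV y" and C: "0 \<le> C" "\<And>x. Re (y x x) \<le> C * (norm x)\<^sup>2"
    and dense: "closure D = UNIV" and rep: "\<And>u v. u \<in> D \<Longrightarrow> v \<in> D \<Longrightarrow> y u v = cinner (E u) v"
  shows "\<exists>B. \<forall>u v. y u v = cinner (B u) v"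
proof -
  have "C-lipschitz_on D E"
  proof (rule lipschitz_onI[OF _ C(1)])
    fix u v assume u: "u \<in> D" and v: "v \<in> D"
    have "norm (E u - E v) \<le> C * norm (u - v)"
    proof (rule norm_le_of_cinner_bound_on_dense[OF dense])
      show "0 \<le> C * norm (u - v)"
        using C by simp
    next
      fix w assume w: "w \<in> D"
      have "cinner (E u - E v) w = y (u - v) w"
        using rep[OF u w] rep[OF v w] pos_sesquilinear_on_diff_left[OF y] by (simp add: cinner_diff_left)
      then show "cmod (cinner (E u - E v) w) \<le> C * norm (u - v) * norm w"
        using pos_sesquilinear_on_bound[OF y C] by simp
    qed
    then show "dist (E u) (E v) \<le> C * dist u v"
      by (simp add: dist_norm)
  qed
  then obtain B where B: "C-lipschitz_on UNIV B" and BE: "\<And>u. u \<in> D \<Longrightarrow> B u = E u"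
    using lipschitz_extend_closure dense by metis
  have "continuous_on UNIV (\<lambda>p. B (fst p))"
    by (rule continuous_on_compose2[OF lipschitz_on_continuous_on[OF B] continuous_on_fst[OF continuous_on_id]])
      simp
  then have "continuous_on UNIV (\<lambda>p. cinner (B (fst p)) (snd p))"
    by (rule bounded_bilinear.continuous_on[OF bounded_bilinear_cinner _ continuous_on_snd[OF continuous_on_id]])
  with bounded_bilinear_continuous_on_pairs[OF bounded_bilinear_pos_sesquilinear[OF y C]]
  have "y u v = cinner (B u) v" for u v
    by (rule continuous_on_pairs_eq_on_dense[OF _ _ dense]) (simp add: rep BE)
  then show ?thesis
    by blast
qed

section \<open>Generalized effect algebras\<close>

lemma geaD:
  assumes "gea E op z"
  shows "z \<in> E"
    and "x \<in> E \<Longrightarrow> y \<in> E \<Longrightarrow> op x y = Some w \<Longrightarrow> w \<in> E"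
    and "x \<in> E \<Longrightarrow> y \<in> E \<Longrightarrow> op x y = op y x"
    and "x \<in> E \<Longrightarrow> y \<in> E \<Longrightarrow> u \<in> E \<Longrightarrow> Option.bind (op x y) (\<lambda>v. op v u) = Option.bind (op y u) (op x)"
    and "x \<in> E \<Longrightarrow> op x z = Some x"
    and "x \<in> E \<Longrightarrow> y \<in> E \<Longrightarrow> y' \<in> E \<Longrightarrow> op x y = Some w \<Longrightarrow> op x y' = Some w \<Longrightarrow> y = y'"
    and "x \<in> E \<Longrightarrow> y \<in> E \<Longrightarrow> op x y = Some z \<Longrightarrow> x = z"
  using assms unfolding gea_def by blast+

lemma map_option_bind_eq_bind:
  assumes "\<And>v. v \<in> set_option a \<Longrightarrow> map_option f (g v) = g' (f v)"
  shows "map_option f (Option.bind a g) = Option.bind (map_option f a) g'"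
  using assms by (cases a) simp_all

locale gea_embedding =
  fixes E :: "'b set" and opE :: "'b \<Rightarrow> 'b \<Rightarrow> 'b option" and zE :: 'b
    and F :: "'c set" and opF :: "'c \<Rightarrow> 'c \<Rightarrow> 'c option" and zF :: 'c and \<phi> :: "'c \<Rightarrow> 'b"
  assumes gea_E: "gea E opE zE"
    and inj: "inj_on \<phi> F" and maps_into: "\<And>x. x \<in> F \<Longrightarrow> \<phi> x \<in> E"
    and zero: "zF \<in> F" "\<phi> zF = zE"
    and closed: "\<And>x y w. x \<in> F \<Longrightarrow> y \<in> F \<Longrightarrow> opF x y = Some w \<Longrightarrow> w \<in> F"
    and hom: "\<And>x y. x \<in> F \<Longrightarrow> y \<in> F \<Longrightarrow> opE (\<phi> x) (\<phi> y) = map_option \<phi> (opF x y)"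
begin

lemma set_option_opF: "x \<in> F \<Longrightarrow> y \<in> F \<Longrightarrow> set_option (opF x y) \<subseteq> F"
  using closed[of x y] by auto

lemma map_option_eqD:
  assumes "map_option \<phi> a = map_option \<phi> b" "set_option a \<subseteq> F" "set_option b \<subseteq> F"
  shows "a = b"
  using assms(1) by (rule option.inj_map_strong[rotated]) (use assms(2,3) inj in \<open>auto dest: inj_onD\<close>)

lemma opF_commute:
  assumes x: "x \<in> F" and y: "y \<in> F"
  shows "opF x y = opF y x"
proof (rule map_option_eqD)
  show "map_option \<phi> (opF x y) = map_option \<phi> (opF y x)"
    using geaD(3)[OF gea_E maps_into[OF x] maps_into[OF y]]
    by (simp only: hom[OF x y, symmetric] hom[OF y x, symmetric])
qed (rule set_option_opF[OF x y], rule set_option_opF[OF y x])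

lemma opF_assoc:
  assumes x: "x \<in> F" and y: "y \<in> F" and u: "u \<in> F"
  shows "Option.bind (opF x y) (\<lambda>v. opF v u) = Option.bind (opF y u) (opF x)"
proof (rule map_option_eqD)
  have "map_option \<phi> (Option.bind (opF x y) (\<lambda>v. opF v u))
      = Option.bind (opE (\<phi> x) (\<phi> y)) (\<lambda>v. opE v (\<phi> u))"
    using closed[OF x y] by (subst map_option_bind_eq_bind) (simp_all add: hom x y u)
  also have "\<dots> = Option.bind (opE (\<phi> y) (\<phi> u)) (opE (\<phi> x))"
    by (rule geaD(4)[OF gea_E maps_into[OF x] maps_into[OF y] maps_into[OF u]])
  also have "\<dots> = map_option \<phi> (Option.bind (opF y u) (opF x))"
    using closed[OF y u] by (subst map_option_bind_eq_bind) (simp_all add: hom x y u)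
  finally show "map_option \<phi> (Option.bind (opF x y) (\<lambda>v. opF v u))
      = map_option \<phi> (Option.bind (opF y u) (opF x))" .
  show "set_option (Option.bind (opF x y) (\<lambda>v. opF v u)) \<subseteq> F"
    using closed[OF x y] set_option_opF[OF _ u] by (cases "opF x y") auto
  show "set_option (Option.bind (opF y u) (opF x)) \<subseteq> F"
    using closed[OF y u] set_option_opF[OF x] by (cases "opF y u") auto
qed

lemma opF_zero:
  assumes x: "x \<in> F"
  shows "opF x zF = Some x"
proof (rule map_option_eqD)
  show "map_option \<phi> (opF x zF) = map_option \<phi> (Some x)"
    using geaD(5)[OF gea_E maps_into[OF x]] hom[OF x zero(1)] zero(2) by simp
qed (rule set_option_opF[OF x zero(1)], simp add: x)

lemma opF_cancel:
  assumes x: "x \<in> F" and y: "y \<in> F" and y': "y' \<in> F" and "opF x y = Some w" "opF x y' = Some w"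
  shows "y = y'"
proof -
  have "opE (\<phi> x) (\<phi> y) = Some (\<phi> w)" "opE (\<phi> x) (\<phi> y') = Some (\<phi> w)"
    using assms by (simp_all add: hom)
  then have "\<phi> y = \<phi> y'"
    by (rule geaD(6)[OF gea_E maps_into[OF x] maps_into[OF y] maps_into[OF y']])
  then show ?thesis
    using inj y y' by (auto dest: inj_onD)
qed

lemma opF_eq_zero:
  assumes x: "x \<in> F" and y: "y \<in> F" and "opF x y = Some zF"
  shows "x = zF"
proof -
  have "opE (\<phi> x) (\<phi> y) = Some zE"
    using assms by (simp add: hom zero(2))
  then have "\<phi> x = \<phi> zF"
    using geaD(7)[OF gea_E maps_into[OF x] maps_into[OF y]] zero(2) by simp
  then show ?thesis
    using inj x zero(1) by (auto dest: inj_onD)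
qed

lemma gea_F: "gea F opF zF"
  unfolding gea_def
proof (intro conjI ballI allI impI)
  show "zF \<in> F"
    by (rule zero(1))
next
  fix x y w assume "x \<in> F" "y \<in> F" "opF x y = Some w"
  then show "w \<in> F"
    by (rule closed)
next
  fix x y assume "x \<in> F" "y \<in> F"
  then show "opF x y = opF y x"
    by (rule opF_commute)
next
  fix x y u assume "x \<in> F" "y \<in> F" "u \<in> F"
  then show "Option.bind (opF x y) (\<lambda>v. opF v u) = Option.bind (opF y u) (opF x)"
    by (rule opF_assoc)
next
  fix x assume "x \<in> F"
  then show "opF x zF = Some x"
    by (rule opF_zero)
next
  fix x y y' w assume "x \<in> F" "y \<in> F" "y' \<in> F" "opF x y = Some w \<and> opF x y' = Some w"
  then show "y = y'"
    by (blast intro: opF_cancel)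
next
  fix x y assume x: "x \<in> F" and y: "y \<in> F" and "opF x y = Some zF"
  then show "x = zF"
    by (rule opF_eq_zero)
  have "opF y x = Some zF"
    using opF_commute[OF x y] \<open>opF x y = Some zF\<close> by simp
  with y x show "y = zF"
    by (rule opF_eq_zero)
qed

end

lemma gea_isomorphic_sym:
  assumes iso: "gea_iso \<phi> E opE zE F opF zF" and zero: "zE \<in> E"
    and closed: "\<And>x y w. x \<in> E \<Longrightarrow> y \<in> E \<Longrightarrow> opE x y = Some w \<Longrightarrow> w \<in> E"
  shows "gea_isomorphic F opF zF E opE zE"
proof -
  have bij: "bij_betw \<phi> E F" and "\<phi> zE = zF"
    and hom: "\<And>x y. x \<in> E \<Longrightarrow> y \<in> E \<Longrightarrow> opF (\<phi> x) (\<phi> y) = map_option \<phi> (opE x y)"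
    using iso unfolding gea_iso_def by blast+
  define \<psi> where "\<psi> = inv_into E \<phi>"
  have inv: "\<psi> (\<phi> x) = x" if "x \<in> E" for x
    using bij that by (simp add: \<psi>_def bij_betw_def)
  have "opE (\<psi> x) (\<psi> y) = map_option \<psi> (opF x y)" if xy: "x \<in> F" "y \<in> F" for x y
  proof -
    obtain a b where ab: "a \<in> E" "b \<in> E" "x = \<phi> a" "y = \<phi> b"
      using bij xy by (auto simp: bij_betw_def)
    have "map_option \<psi> (map_option \<phi> (opE a b)) = opE a b"
      using closed[OF ab(1,2)] inv by (cases "opE a b") simp_all
    then show ?thesis
      by (simp add: ab hom inv)
  qed
  moreover have "bij_betw \<psi> F E"
    unfolding \<psi>_def using bij by (rule bij_betw_inv_into)
  moreover have "\<psi> zF = zE"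
    using inv[OF zero] \<open>\<phi> zE = zF\<close> by simp
  ultimately show ?thesis
    unfolding gea_isomorphic_def gea_iso_def by blast
qed

section \<open>Positive forms\<close>

lemma Vf_iff:
  "t \<in> Vf \<longleftrightarrow> pos_sesquilinear_on (fst t) (snd t) \<and> closure (fst t) = UNIV \<and>
     (\<forall>x y. x \<notin> fst t \<or> y \<notin> fst t \<longrightarrow> snd t x y = 0) \<and> (form_bounded t \<longrightarrow> fst t = UNIV)"
  unfolding Vf_def is_form_def form_positive_def pos_sesquilinear_on_def Let_def by auto

lemma Vf_pos_sesquilinear: "t \<in> Vf \<Longrightarrow> pos_sesquilinear_on (fst t) (snd t)"
  and Vf_dense: "t \<in> Vf \<Longrightarrow> closure (fst t) = UNIV"
  and Vf_vanishes: "t \<in> Vf \<Longrightarrow> x \<notin> fst t \<or> y \<notin> fst t \<Longrightarrow> snd t x y = 0"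
  and Vf_bounded_imp_UNIV: "t \<in> Vf \<Longrightarrow> form_bounded t \<Longrightarrow> fst t = UNIV"
  by (simp_all add: Vf_iff)

lemma Vf_eqI:
  assumes "s \<in> Vf" "s' \<in> Vf" "fst s = fst s'" "\<And>x y. x \<in> fst s \<Longrightarrow> y \<in> fst s \<Longrightarrow> snd s x y = snd s' x y"
  shows "s = s'"
proof -
  have "snd s x y = snd s' x y" for x y
    using assms Vf_vanishes[OF assms(1), of x y] Vf_vanishes[OF assms(2), of x y]
    by (cases "x \<in> fst s \<and> y \<in> fst s") auto
  then show ?thesis
    using assms(3) by (simp add: prod_eq_iff fun_eq_iff)
qed

lemma Vf_diag_cmod: "t \<in> Vf \<Longrightarrow> x \<in> fst t \<Longrightarrow> cmod (snd t x x) = Re (snd t x x)"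
  using pos_sesquilinear_onD(6,7)[OF Vf_pos_sesquilinear, of t x x x]
  by (simp add: complex_is_Real_iff cmod_eq_Re)

lemma Vf_bounded_quadratic_bound:
  assumes "t \<in> Vf" "form_bounded t"
  obtains C where "0 \<le> C" "\<And>x. Re (snd t x x) \<le> C * (norm x)\<^sup>2"
proof -
  have "fst t = UNIV"
    using Vf_bounded_imp_UNIV[OF assms] .
  then have "pos_sesquilinear_on UNIV (snd t)" and "form_bounded (UNIV, snd t)"
    using Vf_pos_sesquilinear[OF assms(1)] assms(2) by (metis prod.collapse)+
  then show ?thesis
    using form_bounded_iff_quadratic_bound that by blast
qed

lemma Vf_bounded_eq_on_dense:
  assumes s: "s \<in> Vf" "form_bounded s" and s': "s' \<in> Vf" "form_bounded s'"
    and dense: "closure D = UNIV" and eq: "\<And>x y. x \<in> D \<Longrightarrow> y \<in> D \<Longrightarrow> snd s x y = snd s' x y"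
  shows "s = s'"
proof -
  have bilinear: "bounded_bilinear (snd t)" if t: "t \<in> Vf" "form_bounded t" for t
  proof -
    obtain C where "0 \<le> C" "\<And>x. Re (snd t x x) \<le> C * (norm x)\<^sup>2"
      using Vf_bounded_quadratic_bound[OF t] by blast
    then show ?thesis
      using bounded_bilinear_pos_sesquilinear Vf_pos_sesquilinear[OF t(1)] Vf_bounded_imp_UNIV[OF t] by metis
  qed
  have "snd s x y = snd s' x y" for x y
    using bounded_bilinear_continuous_on_pairs[OF bilinear[OF s]]
      bounded_bilinear_continuous_on_pairs[OF bilinear[OF s']]
    by (rule continuous_on_pairs_eq_on_dense[OF _ _ dense eq])
  then show ?thesis
    using Vf_bounded_imp_UNIV[OF s] Vf_bounded_imp_UNIV[OF s'] by (simp add: prod_eq_iff fun_eq_iff)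
qed

lemma fst_form_add [simp]: "fst (form_add t s) = fst t \<inter> fst s"
  by (simp add: form_add_def)

lemma snd_form_add: "x \<in> fst t \<inter> fst s \<Longrightarrow> y \<in> fst t \<inter> fst s \<Longrightarrow> snd (form_add t s) x y = snd t x y + snd s x y"
  by (simp add: form_add_def)

lemma form_add_comm: "form_add t s = form_add s t"
  by (auto simp: form_add_def fun_eq_iff add.commute)

lemma form_add_assoc: "form_add (form_add t s) u = form_add t (form_add s u)"
  by (auto simp: form_add_def fun_eq_iff Int_assoc add.assoc)

lemma form_add_zero: "t \<in> Vf \<Longrightarrow> form_add t zero_form = t"
  using Vf_vanishes[of t] by (cases t) (auto simp: form_add_def zero_form_def fun_eq_iff)

lemma oplus_f_eq_Some:
  "oplus_f t s = Some w \<longleftrightarrow> (form_bounded t \<or> form_bounded s \<or> fst t = fst s) \<and> w = form_add t s"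
  by (auto simp: oplus_f_def)

lemma oplus_f_comm: "oplus_f t s = oplus_f s t"
  by (auto simp: oplus_f_def form_add_comm)

lemma form_bounded_dominated:
  assumes "form_bounded s" and "fst t \<subseteq> fst s" and "\<And>x. x \<in> fst t \<Longrightarrow> cmod (snd t x x) \<le> cmod (snd s x x)"
  shows "form_bounded t"
  using assms unfolding form_bounded_def by (meson order_trans subsetD)

lemma form_bounded_form_add:
  assumes "form_bounded t" "form_bounded s"
  shows "form_bounded (form_add t s)"
proof -
  obtain C C' where "\<And>x. x \<in> fst t \<Longrightarrow> norm x = 1 \<Longrightarrow> cmod (snd t x x) \<le> C"
    and "\<And>x. x \<in> fst s \<Longrightarrow> norm x = 1 \<Longrightarrow> cmod (snd s x x) \<le> C'"
    using assms unfolding form_bounded_def by blast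
  then have "cmod (snd (form_add t s) x x) \<le> C + C'" if "x \<in> fst t \<inter> fst s" "norm x = 1" for x
    using that norm_triangle_ineq[of "snd t x x" "snd s x x"] by (fastforce simp: snd_form_add)
  then show ?thesis
    unfolding form_bounded_def by auto
qed

lemma Vf_compatible_nested:
  assumes "t \<in> Vf" "s \<in> Vf" "form_bounded t \<or> form_bounded s \<or> fst t = fst s"
  shows "fst t \<subseteq> fst s \<or> fst s \<subseteq> fst t"
  using assms Vf_bounded_imp_UNIV[OF assms(1)] Vf_bounded_imp_UNIV[OF assms(2)] by auto

lemma form_bounded_summand:
  assumes t: "t \<in> Vf" and s: "s \<in> Vf" and compat: "form_bounded t \<or> form_bounded s \<or> fst t = fst s"
    and bounded: "form_bounded (form_add t s)"
  shows "form_bounded t"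
proof (cases "fst t \<subseteq> fst s")
  case True
  show ?thesis
  proof (rule form_bounded_dominated[OF bounded])
    show "fst t \<subseteq> fst (form_add t s)"
      using True by simp
  next
    fix x assume x: "x \<in> fst t"
    then have xs: "x \<in> fst s"
      using True by blast
    have "cmod (snd t x x) = Re (snd t x x)"
      using Vf_diag_cmod[OF t x] .
    also have "\<dots> \<le> Re (snd t x x) + Re (snd s x x)"
      using pos_sesquilinear_onD(7)[OF Vf_pos_sesquilinear[OF s] xs xs xs] by simp
    also have "\<dots> = Re (snd (form_add t s) x x)"
      using x xs by (simp add: snd_form_add)
    also have "\<dots> \<le> cmod (snd (form_add t s) x x)"
      by (rule complex_Re_le_cmod)
    finally show "cmod (snd t x x) \<le> cmod (snd (form_add t s) x x)" .
  qed
next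
  case False
  then show ?thesis
    using compat Vf_bounded_imp_UNIV[OF s] by auto
qed

lemma form_bounded_form_add_iff:
  assumes "t \<in> Vf" "s \<in> Vf" "form_bounded t \<or> form_bounded s \<or> fst t = fst s"
  shows "form_bounded (form_add t s) \<longleftrightarrow> form_bounded t \<and> form_bounded s"
  using form_bounded_summand[OF assms] form_bounded_summand[OF assms(2,1)] assms(3)
    form_bounded_form_add[of t s] by (auto simp: form_add_comm)

lemma Vf_form_add:
  assumes t: "t \<in> Vf" and s: "s \<in> Vf" and compat: "form_bounded t \<or> form_bounded s \<or> fst t = fst s"
  shows "form_add t s \<in> Vf"
proof -
  have "pos_sesquilinear_on (fst t \<inter> fst s) (snd (form_add t s))"
    using pos_sesquilinear_on_add[OF Vf_pos_sesquilinear[OF t] Vf_pos_sesquilinear[OF s]]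
    by (rule pos_sesquilinear_on_cong) (simp add: snd_form_add)
  moreover have "closure (fst t \<inter> fst s) = UNIV"
    using Vf_compatible_nested[OF t s compat] Vf_dense[OF t] Vf_dense[OF s] by (metis Int_absorb1 Int_absorb2)
  ultimately show ?thesis
    unfolding Vf_iff using form_bounded_form_add_iff[OF t s compat] Vf_bounded_imp_UNIV[OF t]
      Vf_bounded_imp_UNIV[OF s] by (auto simp: form_add_def)
qed

lemma oplus_f_assoc:
  assumes "t \<in> Vf" "s \<in> Vf" "u \<in> Vf"
  shows "Option.bind (oplus_f t s) (\<lambda>v. oplus_f v u) = Option.bind (oplus_f s u) (oplus_f t)"
  using assms Vf_bounded_imp_UNIV[of t] Vf_bounded_imp_UNIV[of s] Vf_bounded_imp_UNIV[of u]
    form_bounded_form_add_iff[of t s] form_bounded_form_add_iff[of s u]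
  by (cases "form_bounded t"; cases "form_bounded s"; cases "form_bounded u")
    (auto simp: oplus_f_def form_add_assoc)

lemma Vf_summand_domain_le:
  assumes t: "t \<in> Vf" and s: "s \<in> Vf" and s': "s' \<in> Vf"
    and compat: "form_bounded t \<or> form_bounded s \<or> fst t = fst s"
    and compat': "form_bounded t \<or> form_bounded s' \<or> fst t = fst s'"
    and eq: "form_add t s = form_add t s'"
  shows "fst s \<subseteq> fst s'"
proof (rule ccontr)
  assume not_le: "\<not> fst s \<subseteq> fst s'"
  then have unbounded': "\<not> form_bounded s'"
    using Vf_bounded_imp_UNIV[OF s'] by auto
  have dom: "fst t \<inter> fst s = fst t \<inter> fst s'"
    using arg_cong[OF eq, of fst] by simp
  then have "\<not> fst s \<subseteq> fst t"
    using not_le by blast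
  then have "\<not> form_bounded t" "fst t \<noteq> fst s"
    using Vf_bounded_imp_UNIV[OF t] by auto
  then have "fst s = UNIV"
    using compat Vf_bounded_imp_UNIV[OF s] by auto
  then have st: "fst s' = fst t"
    using dom compat' \<open>\<not> form_bounded t\<close> unbounded' by auto
  have "form_bounded s"
    using compat \<open>\<not> form_bounded t\<close> \<open>fst t \<noteq> fst s\<close> by simp
  have agree: "snd s' x x = snd s x x" if "x \<in> fst s'" for x
  proof -
    have "snd (form_add t s) x x = snd (form_add t s') x x"
      by (simp add: eq)
    then show ?thesis
      using that st \<open>fst s = UNIV\<close> by (simp add: snd_form_add)
  qed
  have "form_bounded s'"
    by (rule form_bounded_dominated[OF \<open>form_bounded s\<close>]) (simp_all add: \<open>fst s = UNIV\<close> agree)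
  with unbounded' show False ..
qed

lemma Vf_cancel:
  assumes t: "t \<in> Vf" and s: "s \<in> Vf" and s': "s' \<in> Vf"
    and sum: "oplus_f t s = Some w" and sum': "oplus_f t s' = Some w"
  shows "s = s'"
proof -
  have compat: "form_bounded t \<or> form_bounded s \<or> fst t = fst s"
    and compat': "form_bounded t \<or> form_bounded s' \<or> fst t = fst s'"
    and eq: "form_add t s = form_add t s'"
    using sum sum' by (auto simp: oplus_f_eq_Some)
  have dom: "fst s = fst s'"
    using Vf_summand_domain_le[OF t s s' compat compat' eq] Vf_summand_domain_le[OF t s' s compat' compat]
      eq by auto
  have vals: "snd s x y = snd s' x y" if "x \<in> fst t \<inter> fst s" "y \<in> fst t \<inter> fst s" for x y
  proof -
    have "snd (form_add t s) x y = snd (form_add t s') x y"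
      by (simp add: eq)
    then show ?thesis
      using that dom by (simp add: snd_form_add)
  qed
  show ?thesis
  proof (cases "fst s \<subseteq> fst t")
    case True
    show ?thesis
      by (rule Vf_eqI[OF s s' dom]) (use True vals in auto)
  next
    case False
    then have "\<not> form_bounded t" "fst t \<noteq> fst s" "fst t \<noteq> fst s'"
      using Vf_bounded_imp_UNIV[OF t] dom by auto
    then have "form_bounded s" "form_bounded s'"
      using compat compat' by auto
    moreover have "fst t \<subseteq> fst s"
      using Vf_bounded_imp_UNIV[OF s] \<open>form_bounded s\<close> by simp
    ultimately show ?thesis
      using Vf_bounded_eq_on_dense[OF s _ s' _ Vf_dense[OF t]] vals by blast
  qed
qed

lemma Vf_zero_sum:
  assumes t: "t \<in> Vf" and s: "s \<in> Vf" and sum: "oplus_f t s = Some zero_form"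
  shows "t = zero_form"
proof -
  have eq: "form_add t s = zero_form"
    using sum by (simp add: oplus_f_eq_Some)
  have "fst t \<inter> fst s = UNIV"
    using arg_cong[OF eq, of fst] unfolding zero_form_def by simp
  then have dom: "fst t = UNIV" "fst s = UNIV"
    by blast+
  have "snd t x x = 0" for x
  proof -
    have "snd t x x + snd s x x = 0"
      using arg_cong[OF eq, of "\<lambda>u. snd u x x"] dom by (simp add: snd_form_add zero_form_def)
    then have "Re (snd t x x) + Re (snd s x x) = 0"
      by (metis plus_complex.sel(1) zero_complex.sel(1))
    moreover have "0 \<le> Re (snd t x x)" "0 \<le> Re (snd s x x)" "snd t x x \<in> \<real>"
      using pos_sesquilinear_onD(6,7)[OF Vf_pos_sesquilinear[OF t], of x x x]
        pos_sesquilinear_onD(7)[OF Vf_pos_sesquilinear[OF s], of x x x] dom by auto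
    ultimately show ?thesis
      by (simp add: complex_eq_iff complex_is_Real_iff)
  qed
  then have "snd t x y = 0" for x y
    using pos_sesquilinear_on_diag_zero[OF Vf_pos_sesquilinear[OF t]] dom by simp
  then show ?thesis
    using dom by (simp add: zero_form_def prod_eq_iff fun_eq_iff)
qed

lemma zero_form_Vf: "zero_form \<in> Vf"
  by (simp add: Vf_iff zero_form_def pos_sesquilinear_on_def csubspace_UNIV)

lemma zero_form_bounded: "form_bounded zero_form"
  by (auto simp: form_bounded_def zero_form_def)

lemma gea_Vf: "gea (Vf :: 'a::complex_normed_vector form set) oplus_f zero_form"
  unfolding gea_def
proof (intro conjI ballI allI impI)
  show "zero_form \<in> Vf"
    by (rule zero_form_Vf)
next
  fix t s w :: "'a form" assume t: "t \<in> Vf" and s: "s \<in> Vf" and "oplus_f t s = Some w"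
  then show "w \<in> Vf"
    using Vf_form_add[OF t s] by (simp add: oplus_f_eq_Some)
next
  fix t s :: "'a form"
  show "oplus_f t s = oplus_f s t"
    by (rule oplus_f_comm)
next
  fix t s u :: "'a form" assume "t \<in> Vf" "s \<in> Vf" "u \<in> Vf"
  then show "Option.bind (oplus_f t s) (\<lambda>v. oplus_f v u) = Option.bind (oplus_f s u) (oplus_f t)"
    by (rule oplus_f_assoc)
next
  fix t :: "'a form" assume "t \<in> Vf"
  then show "oplus_f t zero_form = Some t"
    by (simp add: oplus_f_def zero_form_bounded form_add_zero)
next
  fix t s s' w :: "'a form" assume "t \<in> Vf" "s \<in> Vf" "s' \<in> Vf" "oplus_f t s = Some w \<and> oplus_f t s' = Some w"
  then show "s = s'"
    using Vf_cancel by blast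
next
  fix t s :: "'a form" assume t: "t \<in> Vf" and s: "s \<in> Vf" and sum: "oplus_f t s = Some zero_form"
  then show "t = zero_form"
    by (rule Vf_zero_sum)
  have "oplus_f s t = Some zero_form"
    using sum by (simp add: oplus_f_comm)
  with s t show "s = zero_form"
    by (rule Vf_zero_sum)
qed

section \<open>Positive operators and their forms\<close>

definition op_form :: "'a::complex_inner lop \<Rightarrow> 'a form" where
  "op_form A = (fst A, \<lambda>x y. if x \<in> fst A \<and> y \<in> fst A then cinner (snd A x) y else 0)"

lemma fst_op_form [simp]: "fst (op_form A) = fst A"
  by (simp add: op_form_def)

lemma snd_op_form: "x \<in> fst A \<Longrightarrow> y \<in> fst A \<Longrightarrow> snd (op_form A) x y = cinner (snd A x) y"
  by (simp add: op_form_def)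

lemma is_op_iff:
  "is_op A \<longleftrightarrow> csubspace (fst A) \<and> closure (fst A) = UNIV \<and>
     (\<forall>x\<in>fst A. \<forall>y\<in>fst A. snd A (x + y) = snd A x + snd A y) \<and>
     (\<forall>c. \<forall>x\<in>fst A. snd A (c *\<^sub>C x) = c *\<^sub>C snd A x) \<and> (\<forall>x. x \<notin> fst A \<longrightarrow> snd A x = 0)"
  by (simp add: is_op_def Let_def)

lemma is_op_pos_sesquilinear_iff:
  assumes "is_op A"
  shows "pos_sesquilinear_on (fst A) (\<lambda>x y. cinner (snd A x) y)
    \<longleftrightarrow> (\<forall>x\<in>fst A. cinner (snd A x) x \<in> \<real> \<and> 0 \<le> Re (cinner (snd A x) x))"
  using assms unfolding is_op_iff pos_sesquilinear_on_def
  by (simp add: cinner_add_left cinner_add_right cinner_scaleC_left cinner_scaleC_right)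

lemma V_iff:
  "A \<in> V \<longleftrightarrow> is_op A \<and> pos_sesquilinear_on (fst A) (\<lambda>x y. cinner (snd A x) y) \<and> (op_bounded A \<longrightarrow> fst A = UNIV)"
  unfolding V_def using is_op_pos_sesquilinear_iff by blast

lemma op_form_pos_sesquilinear:
  "pos_sesquilinear_on (fst A) (\<lambda>x y. cinner (snd A x) y) \<Longrightarrow> pos_sesquilinear_on (fst A) (snd (op_form A))"
  by (erule pos_sesquilinear_on_cong) (simp add: snd_op_form)

lemma quadratic_bound_of_op_bounded:
  assumes "op_bounded A"
  shows "\<exists>C\<ge>0. \<forall>x\<in>fst A. Re (cinner (snd A x) x) \<le> C * (norm x)\<^sup>2"
proof -
  obtain C where C: "\<And>x. x \<in> fst A \<Longrightarrow> norm (snd A x) \<le> C * norm x"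
    using assms unfolding op_bounded_def by blast
  have "Re (cinner (snd A x) x) \<le> max C 0 * (norm x)\<^sup>2" if x: "x \<in> fst A" for x
  proof -
    have "Re (cinner (snd A x) x) \<le> norm (snd A x) * norm x"
      using complex_Re_le_cmod order_trans cinner_Cauchy_Schwarz by blast
    also have "\<dots> \<le> max C 0 * norm x * norm x"
      using C[OF x] mult_right_mono[of C "max C 0" "norm x"] by (intro mult_right_mono) auto
    finally show ?thesis
      by (simp add: power2_eq_square mult.assoc)
  qed
  then show ?thesis
    by (intro exI[of _ "max C 0"]) auto
qed

lemma op_bounded_of_quadratic_bound:
  assumes A: "is_op A" and pos: "pos_sesquilinear_on (fst A) (\<lambda>x y. cinner (snd A x) y)"
    and C: "0 \<le> C" and bound: "\<And>x. x \<in> fst A \<Longrightarrow> Re (cinner (snd A x) x) \<le> C * (norm x)\<^sup>2"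
  shows "op_bounded A"
proof -
  have "norm (snd A x) \<le> C * norm x" if x: "x \<in> fst A" for x
  proof (rule norm_le_of_cinner_bound_on_dense)
    show "closure (fst A) = UNIV"
      using A by (simp add: is_op_iff)
    show "0 \<le> C * norm x"
      using C by simp
    show "cmod (cinner (snd A x) y) \<le> C * norm x * norm y" if "y \<in> fst A" for y
      by (rule pos_sesquilinear_on_bound[OF pos C bound x that])
  qed
  then show ?thesis
    unfolding op_bounded_def by blast
qed

lemma op_form_bounded_iff:
  assumes A: "is_op A" and pos: "pos_sesquilinear_on (fst A) (\<lambda>x y. cinner (snd A x) y)"
  shows "form_bounded (op_form A) \<longleftrightarrow> op_bounded A"
proof -
  have "form_bounded (op_form A) \<longleftrightarrow> (\<exists>C\<ge>0. \<forall>x\<in>fst A. Re (cinner (snd A x) x) \<le> C * (norm x)\<^sup>2)"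
    using form_bounded_iff_quadratic_bound[OF op_form_pos_sesquilinear[OF pos]]
    by (simp add: op_form_def snd_op_form)
  then show ?thesis
    using quadratic_bound_of_op_bounded op_bounded_of_quadratic_bound[OF A pos] by blast
qed

lemma V_iff_op_form: "A \<in> V \<longleftrightarrow> is_op A \<and> op_form A \<in> Vf"
proof (cases "is_op A")
  case True
  have "pos_sesquilinear_on (fst A) (\<lambda>x y. cinner (snd A x) y) \<longleftrightarrow> pos_sesquilinear_on (fst A) (snd (op_form A))"
  proof
    assume "pos_sesquilinear_on (fst A) (snd (op_form A))"
    then show "pos_sesquilinear_on (fst A) (\<lambda>x y. cinner (snd A x) y)"
      by (rule pos_sesquilinear_on_cong) (simp add: snd_op_form)
  qed (rule op_form_pos_sesquilinear)
  with True show ?thesis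
    unfolding V_iff Vf_iff using op_form_bounded_iff[OF True]
    by (auto simp: is_op_iff op_form_def)
qed (simp add: V_iff)

lemma V_is_op: "A \<in> V \<Longrightarrow> is_op A"
  and V_op_form: "A \<in> V \<Longrightarrow> op_form A \<in> Vf"
  by (simp_all add: V_iff_op_form)

lemma V_pos_sesquilinear: "A \<in> V \<Longrightarrow> pos_sesquilinear_on (fst A) (\<lambda>x y. cinner (snd A x) y)"
  by (simp add: V_iff)

lemma V_bounded_imp_UNIV: "A \<in> V \<Longrightarrow> op_bounded A \<Longrightarrow> fst A = UNIV"
  by (simp add: V_iff)

lemma V_op_form_bounded_iff: "A \<in> V \<Longrightarrow> form_bounded (op_form A) \<longleftrightarrow> op_bounded A"
  using op_form_bounded_iff V_is_op V_pos_sesquilinear by blast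

lemma op_form_op_add: "op_form (op_add A B) = form_add (op_form A) (op_form B)"
  by (auto simp: form_add_def op_form_def op_add_def fun_eq_iff cinner_add_left)

lemma op_form_zero: "op_form zero_op = zero_form"
  by (simp add: op_form_def zero_op_def zero_form_def)

lemma zero_op_V: "zero_op \<in> V"
  unfolding V_iff_op_form op_form_zero by (simp add: zero_form_Vf is_op_iff zero_op_def csubspace_UNIV)

lemma is_op_op_add:
  assumes "is_op A" "is_op B" "closure (fst A \<inter> fst B) = UNIV"
  shows "is_op (op_add A B)"
  using assms unfolding is_op_iff
  by (auto simp: op_add_def csubspace_Int scaleC_add_right csubspace_add csubspace_scaleC)

lemma V_op_add:
  assumes A: "A \<in> V" and B: "B \<in> V" and compat: "op_bounded A \<or> op_bounded B \<or> fst A = fst B"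
  shows "op_add A B \<in> V"
proof -
  have compat_form: "form_bounded (op_form A) \<or> form_bounded (op_form B) \<or> fst (op_form A) = fst (op_form B)"
    using compat V_op_form_bounded_iff[OF A] V_op_form_bounded_iff[OF B] by simp
  have "form_add (op_form A) (op_form B) \<in> Vf"
    by (rule Vf_form_add[OF V_op_form[OF A] V_op_form[OF B] compat_form])
  then have "closure (fst A \<inter> fst B) = UNIV"
    using Vf_dense by fastforce
  then show ?thesis
    unfolding V_iff_op_form op_form_op_add
    using is_op_op_add[OF V_is_op[OF A] V_is_op[OF B]] \<open>form_add (op_form A) (op_form B) \<in> Vf\<close> by blast
qed

lemma V_closed: "A \<in> V \<Longrightarrow> B \<in> V \<Longrightarrow> oplus_D A B = Some W \<Longrightarrow> W \<in> V"
  by (auto simp: oplus_D_def V_op_add split: if_splits)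

lemma oplus_f_op_form:
  assumes "A \<in> V" "B \<in> V"
  shows "oplus_f (op_form A) (op_form B) = map_option op_form (oplus_D A B)"
  using V_op_form_bounded_iff[OF assms(1)] V_op_form_bounded_iff[OF assms(2)]
  by (simp add: oplus_f_def oplus_D_def op_form_op_add)

lemma inj_on_op_form: "inj_on op_form V"
proof (rule inj_onI)
  fix A B assume A: "A \<in> V" and B: "B \<in> V" and eq: "op_form A = op_form B"
  have dom: "fst A = fst B"
    using arg_cong[OF eq, of fst] by simp
  have "snd A x = snd B x" for x
  proof (cases "x \<in> fst A")
    case True
    have "snd A x - snd B x = 0"
    proof (rule cinner_eq_zero_on_dense)
      show "closure (fst A) = UNIV"
        using V_is_op[OF A] by (simp add: is_op_iff)
      show "cinner (snd A x - snd B x) y = 0" if "y \<in> fst A" for y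
        using arg_cong[OF eq, of "\<lambda>t. snd t x y"] True that dom by (simp add: snd_op_form cinner_diff_left)
    qed
    then show ?thesis
      by simp
  next
    case False
    then show ?thesis
      using V_is_op[OF A] V_is_op[OF B] dom by (simp add: is_op_iff)
  qed
  then show "A = B"
    using dom by (simp add: prod_eq_iff fun_eq_iff)
qed

lemma gea_V: "gea (V :: 'a::complex_inner lop set) oplus_D zero_op"
proof -
  interpret gea_embedding Vf oplus_f zero_form V oplus_D zero_op op_form
    by (rule gea_embedding.intro[OF gea_Vf inj_on_op_form V_op_form zero_op_V op_form_zero V_closed
          oplus_f_op_form])
  show ?thesis
    by (rule gea_F)
qed

section \<open>Forms induced by operators\<close>

lemma Gf_eq_image: "Gf = op_form ` V"
proof
  show "Gf \<subseteq> op_form ` V"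
  proof
    fix t assume "t \<in> Gf"
    then obtain A where t: "t \<in> Vf" and A: "A \<in> V" "fst A = fst t"
      and rep: "\<And>x y. x \<in> fst t \<Longrightarrow> y \<in> fst t \<Longrightarrow> snd t x y = cinner (snd A x) y"
      unfolding Gf_def by blast
    have "t = op_form A"
      by (rule Vf_eqI[OF t V_op_form[OF A(1)]]) (simp_all add: A(2) rep snd_op_form)
    with A(1) show "t \<in> op_form ` V"
      by blast
  qed
next
  show "op_form ` V \<subseteq> Gf"
  proof (rule image_subsetI)
    fix A assume "A \<in> V"
    then show "op_form A \<in> Gf"
      unfolding Gf_def using V_op_form[OF \<open>A \<in> V\<close>] by (auto simp: snd_op_form intro!: bexI[of _ A])
  qed
qed

lemma is_op_representing:
  assumes f: "pos_sesquilinear_on D f" and dense: "closure D = UNIV"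
    and rep: "\<And>u v. u \<in> D \<Longrightarrow> v \<in> D \<Longrightarrow> f u v = cinner (B u) v"
  shows "is_op (D, \<lambda>u. if u \<in> D then B u else 0)"
proof -
  have D: "csubspace D"
    using f by (simp add: pos_sesquilinear_on_def)
  have eqI: "b = b'" if "\<And>w. w \<in> D \<Longrightarrow> cinner b w = cinner b' w" for b b'
    using cinner_eq_zero_on_dense[OF dense, of "b - b'"] that by (simp add: cinner_diff_left)
  have "B (u + v) = B u + B v" if u: "u \<in> D" and v: "v \<in> D" for u v
  proof (rule eqI)
    fix w assume w: "w \<in> D"
    have "cinner (B (u + v)) w = f (u + v) w"
      using rep[OF csubspace_add[OF D u v] w] by simp
    also have "\<dots> = f u w + f v w"
      by (rule pos_sesquilinear_onD(2)[OF f u v w])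
    also have "\<dots> = cinner (B u + B v) w"
      by (simp add: rep u v w cinner_add_left)
    finally show "cinner (B (u + v)) w = cinner (B u + B v) w" .
  qed
  moreover have "B (c *\<^sub>C u) = c *\<^sub>C B u" if u: "u \<in> D" for c u
  proof (rule eqI)
    fix w assume w: "w \<in> D"
    have "cinner (B (c *\<^sub>C u)) w = f (c *\<^sub>C u) w"
      using rep[OF csubspace_scaleC[OF D u] w] by simp
    also have "\<dots> = c * f u w"
      by (rule pos_sesquilinear_onD(4)[OF f u w w])
    also have "\<dots> = cinner (c *\<^sub>C B u) w"
      by (simp add: rep u w cinner_scaleC_left)
    finally show "cinner (B (c *\<^sub>C u)) w = cinner (c *\<^sub>C B u) w" .
  qed
  ultimately show ?thesis
    using D dense by (simp add: is_op_iff csubspace_add csubspace_scaleC)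
qed

lemma Gf_of_representing:
  assumes t: "t \<in> Vf" and rep: "\<And>u v. u \<in> fst t \<Longrightarrow> v \<in> fst t \<Longrightarrow> snd t u v = cinner (B u) v"
  shows "t \<in> Gf"
proof -
  define A where "A = (fst t, \<lambda>u. if u \<in> fst t then B u else 0)"
  have "is_op A"
    unfolding A_def by (rule is_op_representing[OF Vf_pos_sesquilinear[OF t] Vf_dense[OF t] rep])
  moreover have "op_form A = t"
  proof -
    have "snd (op_form A) x y = snd t x y" for x y
      using rep[of x y] Vf_vanishes[OF t, of x y] by (auto simp: A_def op_form_def)
    then show ?thesis
      by (simp add: A_def prod_eq_iff fun_eq_iff)
  qed
  ultimately have "A \<in> V"
    using t by (simp add: V_iff_op_form)
  then show ?thesis
    using \<open>op_form A = t\<close> Gf_eq_image by blast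
qed

lemma Gf_of_bounded_represented_on_dense:
  assumes s: "(s :: 'a::chilbert form) \<in> Vf" "form_bounded s" and dense: "closure D = UNIV"
    and rep: "\<And>u v. u \<in> D \<Longrightarrow> v \<in> D \<Longrightarrow> snd s u v = cinner (E u) v"
  shows "s \<in> Gf"
proof -
  have ps: "pos_sesquilinear_on UNIV (snd s)"
    using Vf_pos_sesquilinear[OF s(1)] Vf_bounded_imp_UNIV[OF s] by simp
  obtain K where "0 \<le> K" "\<And>x. Re (snd s x x) \<le> K * (norm x)\<^sup>2"
    using Vf_bounded_quadratic_bound[OF s] by blast
  then obtain B where "\<And>u v. snd s u v = cinner (B u) v"
    using bounded_form_representable[OF ps _ _ dense rep] by blast
  then show ?thesis
    by (rule Gf_of_representing[OF s(1)])
qed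

lemma Gf_summand:
  assumes A: "A \<in> V" and C: "C \<in> V" and s: "(s :: 'a::chilbert form) \<in> Vf"
    and sum: "oplus_f (op_form A) s = Some (op_form C)"
  shows "s \<in> Gf"
proof -
  have compat: "form_bounded (op_form A) \<or> form_bounded s \<or> fst A = fst s"
    and eq: "form_add (op_form A) s = op_form C"
    using sum by (simp_all add: oplus_f_eq_Some)
  have dom: "fst C = fst A \<inter> fst s"
    using arg_cong[OF eq, of fst] by simp
  have rep: "snd s u v = cinner (snd C u - snd A u) v" if "u \<in> fst C" "v \<in> fst C" for u v
    using arg_cong[OF eq, of "\<lambda>t. snd t u v"] that dom
    by (auto simp: snd_form_add snd_op_form cinner_diff_left algebra_simps)
  show ?thesis
  proof (cases "fst s \<subseteq> fst A")
    case True
    show ?thesis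
    proof (rule Gf_of_representing[OF s])
      fix u v assume "u \<in> fst s" "v \<in> fst s"
      then show "snd s u v = cinner (snd C u - snd A u) v"
        using True dom by (intro rep) auto
    qed
  next
    case False
    then have "\<not> op_bounded A"
      using V_bounded_imp_UNIV[OF A] by auto
    then have "form_bounded s" and "fst s = UNIV"
      using compat False V_op_form_bounded_iff[OF A] Vf_bounded_imp_UNIV[OF s] by auto
    moreover have "closure (fst C) = UNIV"
      using dom \<open>fst s = UNIV\<close> V_is_op[OF A] by (simp add: is_op_iff)
    ultimately show ?thesis
      using Gf_of_bounded_represented_on_dense[OF s _ _ rep] by blast
  qed
qed

lemma sub_gea_Gf: "sub_gea (Gf :: 'a::chilbert form set) Vf oplus_f zero_form"
  unfolding sub_gea_def
proof (intro conjI ballI impI)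
  show "gea (Vf :: 'a form set) oplus_f zero_form"
    by (rule gea_Vf)
  show "(Gf :: 'a form set) \<subseteq> Vf"
    by (auto simp: Gf_def)
  show "zero_form \<in> (Gf :: 'a form set)"
    unfolding Gf_eq_image op_form_zero[symmetric] by (rule imageI[OF zero_op_V])
next
  fix t s w :: "'a form"
  assume t: "t \<in> Vf" and s: "s \<in> Vf" and sum: "oplus_f t s = Some w"
    and two: "t \<in> Gf \<and> s \<in> Gf \<or> t \<in> Gf \<and> w \<in> Gf \<or> s \<in> Gf \<and> w \<in> Gf"
  have summand: "b \<in> Gf" if ab: "a \<in> Gf" "w \<in> Gf" "b \<in> Vf" "oplus_f a b = Some w" for a b
  proof -
    obtain A C where "A \<in> V" "C \<in> V" "a = op_form A" "w = op_form C"
      using ab(1,2) unfolding Gf_eq_image by blast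
    then show ?thesis
      using Gf_summand[of A C b] ab(3,4) by simp
  qed
  have "w \<in> Gf" if ts: "t \<in> Gf" "s \<in> Gf"
  proof -
    obtain A B where A: "A \<in> V" and B: "B \<in> V" and "t = op_form A" "s = op_form B"
      using ts unfolding Gf_eq_image by blast
    then have "map_option op_form (oplus_D A B) = Some w"
      using sum oplus_f_op_form[OF A B] by simp
    then obtain W where "oplus_D A B = Some W" "w = op_form W"
      by blast
    then show ?thesis
      unfolding Gf_eq_image using V_closed[OF A B] by blast
  qed
  moreover have "s \<in> Gf" if "t \<in> Gf" "w \<in> Gf"
    using summand[OF that s sum] .
  moreover have "t \<in> Gf" if "s \<in> Gf" "w \<in> Gf"
    using summand[OF that t] sum by (simp add: oplus_f_comm)
  ultimately show "t \<in> Gf" "s \<in> Gf" "w \<in> Gf"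
    using two by blast+
qed

lemma gea_iso_op_form:
  "gea_iso op_form (V :: 'a::complex_inner lop set) oplus_D zero_op Gf (restr_op Gf oplus_f) zero_form"
  unfolding gea_iso_def
proof (intro conjI ballI)
  show "bij_betw op_form V Gf"
    unfolding bij_betw_def Gf_eq_image using inj_on_op_form by blast
  show "op_form zero_op = zero_form"
    by (rule op_form_zero)
next
  fix A B :: "'a lop" assume A: "A \<in> V" and B: "B \<in> V"
  show "restr_op Gf oplus_f (op_form A) (op_form B) = map_option op_form (oplus_D A B)"
    using V_closed[OF A B] Gf_eq_image
    by (cases "oplus_D A B") (auto simp: restr_op_def oplus_f_op_form[OF A B])
qed

theorem theorem4p14:
  assumes "infinite_dimensional TYPE('a::chilbert)"
  shows "sub_gea (Gf :: 'a form set) Vf oplus_f zero_form \<and>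
         gea (V :: 'a lop set) oplus_D zero_op \<and>
         gea_isomorphic (Gf :: 'a form set) (restr_op Gf oplus_f) zero_form
                        (V :: 'a lop set) oplus_D zero_op"
proof -
  have "gea_isomorphic (Gf :: 'a form set) (restr_op Gf oplus_f) zero_form (V :: 'a lop set) oplus_D zero_op"
    by (rule gea_isomorphic_sym[OF gea_iso_op_form zero_op_V]) (rule V_closed)
  with sub_gea_Gf gea_V show ?thesis
    by blast
qed

end
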